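(* For every $n\ge1$, there is a bijection between the set of walks of length $2n-2$ in the path graph $P_7$ that start and end at the middle vertex $v_4$ and the set of rectangular permutations in $S_n$.
   Context: $P_7$ is the path graph with vertices $v_1,\dots,v_7$ and edges $v_iv_{i+1}$ for $1\le i\le 6$. A walk of length $\ell$ is a sequence of vertices $w_0,w_1,\dots,w_\ell$ with $w_{j-1}$ and $w_j$ adjacent for all $j$. A permutation is rectangular if it avoids the patterns $2413$, $2431$, $4213$ and $4231$. *)

theory Defs
  imports "HOL-Combinatorics.Permutations"
begin

definition P7_vertices :: "nat set" where
  "P7_vertices = {1..7}"

definition P7_adj :: "nat \<Rightarrow> nat \<Rightarrow> bool" where
  "P7_adj i j \<longleftrightarrow> i \<in> P7_vertices \<and> j \<in> P7_vertices \<and> (j = i + 1 \<or> i = j + 1)"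

definition P7_walk :: "nat \<Rightarrow> nat list \<Rightarrow> bool" where
  "P7_walk l w \<longleftrightarrow> length w = l + 1 \<and> set w \<subseteq> P7_vertices \<and>
     (\<forall>j<l. P7_adj (w ! j) (w ! (j + 1)))"

definition P7_walks_v4 :: "nat \<Rightarrow> nat list set" where
  "P7_walks_v4 l = {w. P7_walk l w \<and> w ! 0 = 4 \<and> w ! l = 4}"

definition contains_pattern :: "nat \<Rightarrow> (nat \<Rightarrow> nat) \<Rightarrow> nat list \<Rightarrow> bool" where
  "contains_pattern n s tau \<longleftrightarrow>
     (\<exists>idx :: nat \<Rightarrow> nat. strict_mono_on {..<length tau} idx \<and>
        idx ` {..<length tau} \<subseteq> {1..n} \<and>
        (\<forall>a<length tau. \<forall>b<length tau. s (idx a) < s (idx b) \<longleftrightarrow> tau ! a < tau ! b))"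

definition rectangular :: "nat \<Rightarrow> (nat \<Rightarrow> nat) \<Rightarrow> bool" where
  "rectangular n s \<longleftrightarrow>
     \<not> contains_pattern n s [2,4,1,3] \<and> \<not> contains_pattern n s [2,4,3,1] \<and>
     \<not> contains_pattern n s [4,2,1,3] \<and> \<not> contains_pattern n s [4,2,3,1]"

definition rect_perms :: "nat \<Rightarrow> (nat \<Rightarrow> nat) set" where
  "rect_perms n = {s. s permutes {1..n} \<and> rectangular n s}"

end

theory Submission
  imports Defs "HOL-Library.Sublist"
begin

(*
  Write c n for the number of rectangular permutations of {1..n} in one-line notation and
  t n for the number of those in which at least two entries follow the maximum n.  Deleting n
  shows that the ones ending in n, and the ones with exactly one entry after n, are each
  counted by c (n - 1).  Otherwise delete the entry x right after n and standardise: since the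
  patterns n x r r' and v n r r' would be forbidden, all entries after x lie on one side of x
  and no entry before n separates x from them, so x is recovered as the least later entry or
  as one more than the largest.  This makes the deletion two-to-one onto the rectangular
  permutations of {1..n-1} in which n - 1 is not last, whence
    c n = 2 c (n - 1) + t n  and  t (n + 1) = 2 (c (n - 1) + t n).
  On the walk side, the numbers a k of closed walks of length 2k at v_4 and b k of walks of
  length 2k from v_4 to v_2 or v_6 satisfy a (k + 1) = 2 a k + b k and
  b (k + 1) = 2 a k + 2 b k; so a k = c (k + 1) and b k = t (k + 2) by induction.
*)

section \<open>Rectangular lists\<close>

definition forbidden_quad :: "nat \<Rightarrow> nat \<Rightarrow> nat \<Rightarrow> nat \<Rightarrow> bool" where
  "forbidden_quad a b c d \<longleftrightarrow>
     (c < a \<and> a < d \<and> d < b) \<or> (d < a \<and> a < c \<and> c < b) \<or>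
     (c < b \<and> b < d \<and> d < a) \<or> (d < b \<and> b < c \<and> c < a)"

definition rect_list :: "nat list \<Rightarrow> bool" where
  "rect_list xs \<longleftrightarrow> (\<forall>a b c d. subseq [a, b, c, d] xs \<longrightarrow> \<not> forbidden_quad a b c d)"

lemma forbidden_quad_swap_last: "forbidden_quad a b d c \<longleftrightarrow> forbidden_quad a b c d"
  unfolding forbidden_quad_def by blast

lemma forbidden_quad_strict_mono_on:
  assumes "strict_mono_on S h" "a \<in> S" "b \<in> S" "c \<in> S" "d \<in> S"
  shows "forbidden_quad (h a) (h b) (h c) (h d) \<longleftrightarrow> forbidden_quad a b c d"
  using assms unfolding forbidden_quad_def by (simp add: strict_mono_on_less)

lemma subseq_mapE:
  assumes "subseq ys (map f xs)"
  obtains zs where "subseq zs xs" "ys = map f zs"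
  using assms by (metis nths_map subseq_conv_nths)

lemma subseq_set_subset: "subseq xs ys \<Longrightarrow> set xs \<subseteq> set ys"
  by (metis set_nths_subset subseq_conv_nths)

lemma sorted_wrt_subseq: "subseq xs ys \<Longrightarrow> sorted_wrt R ys \<Longrightarrow> sorted_wrt R xs"
  by (induction rule: list_emb.induct) (auto dest: list_emb_set)

lemma subseq_pair:
  assumes "c \<in> set B" "d \<in> set B" "c \<noteq> d"
  shows "subseq [c, d] B \<or> subseq [d, c] B"
  using assms by (induction B) (auto simp: subseq_singleton_left)

lemma subseq_insertE:
  assumes "subseq zs (A @ x # B)"
  obtains "subseq zs (A @ B)" | P Q where "zs = P @ x # Q" "subseq P A" "subseq Q B"
proof -
  obtain zs1 zs2 where zs: "zs = zs1 @ zs2" "subseq zs1 A" "subseq zs2 (x # B)"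
    using assms by (auto elim: subseq_appendE)
  show thesis
  proof (cases "subseq zs2 B")
    case True
    then show ?thesis using zs that(1) by (simp add: list_emb_append_mono)
  next
    case False
    then obtain Q where "zs2 = x # Q" "subseq Q B"
      using zs(3) by (cases zs2) (auto split: if_splits)
    then show ?thesis using zs that(2) by simp
  qed
qed

lemma rect_list_subseq: "subseq xs ys \<Longrightarrow> rect_list ys \<Longrightarrow> rect_list xs"
  unfolding rect_list_def by (meson subseq_order.order_trans)

lemma rect_list_remove: "rect_list (A @ x # B) \<Longrightarrow> rect_list (A @ B)"
proof -
  have "subseq (A @ B) (A @ [x] @ B)"
    by (intro list_emb_append_mono subseq_drop_many subseq_order.order_refl)
  then show "rect_list (A @ x # B) \<Longrightarrow> rect_list (A @ B)" by (simp add: rect_list_subseq)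
qed

lemma rect_list_map:
  assumes "strict_mono_on (set xs) h" "rect_list xs"
  shows "rect_list (map h xs)"
  unfolding rect_list_def
proof (intro allI impI notI)
  fix a b c d
  assume "subseq [a, b, c, d] (map h xs)" "forbidden_quad a b c d"
  then obtain zs where zs: "subseq zs xs" "[a, b, c, d] = map h zs"
    by (auto elim: subseq_mapE)
  then obtain a' b' c' d' where "zs = [a', b', c', d']" "a = h a'" "b = h b'" "c = h c'" "d = h d'"
    by (auto simp: Cons_eq_map_conv)
  moreover have "set zs \<subseteq> set xs" using zs(1) by (rule subseq_set_subset)
  ultimately show False
    using \<open>forbidden_quad a b c d\<close> zs(1) assms
    by (auto simp: forbidden_quad_strict_mono_on rect_list_def)
qed

lemma rect_list_quad_across:
  assumes "rect_list (A @ B)" "subseq [a, b] A" "c \<in> set B" "d \<in> set B" "c \<noteq> d"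
  shows "\<not> forbidden_quad a b c d"
  using subseq_pair[OF assms(3-5)]
proof
  assume "subseq [c, d] B"
  with assms(2) have "subseq ([a, b] @ [c, d]) (A @ B)" by (rule list_emb_append_mono)
  then show ?thesis using assms(1) by (simp add: rect_list_def)
next
  assume "subseq [d, c] B"
  with assms(2) have "subseq ([a, b] @ [d, c]) (A @ B)" by (rule list_emb_append_mono)
  then have "\<not> forbidden_quad a b d c" using assms(1) by (simp add: rect_list_def)
  then show ?thesis by (metis forbidden_quad_swap_last)
qed

lemma rect_list_insertI:
  assumes "rect_list (A @ B)"
    and "\<And>P Q a b c d. [a, b, c, d] = P @ x # Q \<Longrightarrow> subseq P A \<Longrightarrow> subseq Q B \<Longrightarrow>
           \<not> forbidden_quad a b c d"
  shows "rect_list (A @ x # B)"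
  unfolding rect_list_def
proof (intro allI impI)
  fix a b c d
  assume "subseq [a, b, c, d] (A @ x # B)"
  then show "\<not> forbidden_quad a b c d"
  proof (cases rule: subseq_insertE)
    case 1
    then show ?thesis using assms(1) by (simp add: rect_list_def)
  qed (use assms(2) in metis)
qed

lemma rect_list_insert_max:
  assumes "rect_list (A @ B)" "\<forall>v\<in>set A. v < m" "length B \<le> 1"
  shows "rect_list (A @ m # B)"
proof (rule rect_list_insertI[OF assms(1)])
  fix P Q a b c d
  assume PQ: "[a, b, c, d] = P @ m # Q" "subseq P A" "subseq Q B"
  then have "length Q \<le> 1" using assms(3) list_emb_length by fastforce
  with PQ(1) have "(P = [a, b, c] \<and> d = m) \<or> (P = [a, b] \<and> c = m)"
    by (auto simp: Cons_eq_append_conv)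
  then have "a < m \<and> b < m \<and> (c = m \<or> d = m)"
    using subseq_set_subset[OF PQ(2)] assms(2) by auto
  then show "\<not> forbidden_quad a b c d"
    by (auto simp: forbidden_quad_def)
qed

lemma forbidden_quad_insert_first:
  assumes rect: "rect_list (A @ B)" and big: "m \<in> set A" "x < m"
    and side: "(\<forall>r\<in>set B. x < r) \<or> (\<forall>r\<in>set B. r < x)" and "subseq [b, c, d] B"
  shows "\<not> forbidden_quad x b c d"
proof -
  have B: "b \<in> set B" "c \<in> set B" "d \<in> set B" using subseq_set_subset[OF \<open>subseq [b, c, d] B\<close>] by auto
  show ?thesis
  proof (cases "\<forall>r\<in>set B. x < r")
    case True
    then show ?thesis using B by (auto simp: forbidden_quad_def)
  next
    case False
    then have "b < x" "c < x" "d < x" using B side by auto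
    then have "forbidden_quad x b c d \<longleftrightarrow> forbidden_quad m b c d"
      using big(2) by (auto simp: forbidden_quad_def)
    moreover have "subseq ([m] @ [b, c, d]) (A @ B)"
      using big(1) \<open>subseq [b, c, d] B\<close> by (intro list_emb_append_mono) (simp_all add: subseq_singleton_left)
    ultimately show ?thesis using rect by (simp add: rect_list_def)
  qed
qed

lemma forbidden_quad_insert_last:
  assumes rect: "rect_list (A @ B)" and "subseq [a, b, c] A" "r \<in> set B" "x \<notin> set A" "r \<notin> set A"
    and gap: "\<And>v. v \<in> set A \<Longrightarrow> \<not> (x < v \<and> v < r) \<and> \<not> (r < v \<and> v < x)"
  shows "\<not> forbidden_quad a b c x"
proof -
  have "a \<in> set A" "b \<in> set A" using subseq_set_subset[OF \<open>subseq [a, b, c] A\<close>] by auto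
  then have "a < x \<longleftrightarrow> a < r" "x < a \<longleftrightarrow> r < a" "b < x \<longleftrightarrow> b < r" "x < b \<longleftrightarrow> r < b"
    using assms(4,5) gap by (metis linorder_neqE_nat)+
  then have "forbidden_quad a b c x \<longleftrightarrow> forbidden_quad a b c r" by (simp add: forbidden_quad_def)
  moreover have "subseq ([a, b, c] @ [r]) (A @ B)"
    using assms(2,3) by (intro list_emb_append_mono) (simp_all add: subseq_singleton_left)
  ultimately show ?thesis using rect by (simp add: rect_list_def)
qed

lemma rect_list_insert_one_sided:
  assumes rect: "rect_list (A @ B)" and "B \<noteq> []" and "set A \<inter> set B = {}" and "x \<notin> set A"
    and big: "m \<in> set A" "x < m"
    and side: "(\<forall>r\<in>set B. x < r) \<or> (\<forall>r\<in>set B. r < x)"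
    and gap: "\<And>v r. v \<in> set A \<Longrightarrow> r \<in> set B \<Longrightarrow> \<not> (x < v \<and> v < r) \<and> \<not> (r < v \<and> v < x)"
  shows "rect_list (A @ x # B)"
proof (rule rect_list_insertI[OF rect])
  fix P Q a b c d
  assume PQ: "[a, b, c, d] = P @ x # Q" "subseq P A" "subseq Q B"
  have inA: "set P \<subseteq> set A" and inB: "set Q \<subseteq> set B"
    using PQ(2,3) by (simp_all add: subseq_set_subset)
  from PQ(1) consider "P = []" "a = x" "Q = [b, c, d]" | "P = [a]" "b = x" "Q = [c, d]"
    | "P = [a, b]" "c = x" "Q = [d]" | "P = [a, b, c]" "d = x" "Q = []"
    by (auto simp: Cons_eq_append_conv)
  then show "\<not> forbidden_quad a b c d"
  proof cases
    case 1
    then show ?thesis using forbidden_quad_insert_first[OF rect big side] PQ(3) by simp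
  next
    case 2
    then have "a \<in> set A" "c \<in> set B" "d \<in> set B" using inA inB by auto
    from side show ?thesis
    proof
      assume "\<forall>r\<in>set B. x < r"
      then have "x < c" "x < d" using \<open>c \<in> set B\<close> \<open>d \<in> set B\<close> by auto
      then show ?thesis using 2 by (auto simp: forbidden_quad_def)
    next
      assume "\<forall>r\<in>set B. r < x"
      then have "c < x" "d < x" using \<open>c \<in> set B\<close> \<open>d \<in> set B\<close> by auto
      then show ?thesis
        using 2 gap[OF \<open>a \<in> set A\<close> \<open>c \<in> set B\<close>] gap[OF \<open>a \<in> set A\<close> \<open>d \<in> set B\<close>]
        by (auto simp: forbidden_quad_def)
    qed
  next
    case 3
    then show ?thesis
      using inA inB gap[of a d] gap[of b d] by (auto simp: forbidden_quad_def)
  next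
    case 4
    obtain r where r: "r \<in> set B" using \<open>B \<noteq> []\<close> by fastforce
    then have "r \<notin> set A" using \<open>set A \<inter> set B = {}\<close> by blast
    then show ?thesis
      using 4 PQ(2) forbidden_quad_insert_last[OF rect _ r \<open>x \<notin> set A\<close>] gap[OF _ r] by simp
  qed
qed

lemma rect_list_between_after_max:
  assumes "rect_list (A @ m # B)" "\<forall>r\<in>set B. r < m" "v \<in> set A" "r1 \<in> set B" "r2 \<in> set B"
  shows "\<not> (r1 < v \<and> v < r2)"
proof
  assume between: "r1 < v \<and> v < r2"
  have "rect_list ((A @ [m]) @ B)" using assms(1) by simp
  moreover have "subseq [v, m] (A @ [m])"
    using list_emb_append_mono[of "(=)" "[v]" A "[m]" "[m]"] assms(3) by (simp add: subseq_singleton_left)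
  ultimately have "\<not> forbidden_quad v m r1 r2"
    using rect_list_quad_across assms(4,5) between by (metis less_asym)
  moreover have "r2 < m" using assms(2,5) by blast
  ultimately show False using between by (simp add: forbidden_quad_def)
qed

lemma rect_list_after_max_one_side:
  assumes "rect_list (A @ m # x # B)" "\<forall>r\<in>set B. r < m" "x < m" "r1 \<in> set B" "r2 \<in> set B"
  shows "\<not> (r1 < x \<and> x < r2)"
proof
  assume between: "r1 < x \<and> x < r2"
  have "rect_list ((A @ [m, x]) @ B)" using assms(1) by simp
  moreover have "subseq [m, x] (A @ [m, x])" by (intro subseq_drop_many subseq_order.order_refl)
  ultimately have "\<not> forbidden_quad m x r1 r2"
    using rect_list_quad_across assms(4,5) between by (metis less_asym)
  moreover have "r2 < m" using assms(2,5) by blast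
  ultimately show False using between assms(3) by (simp add: forbidden_quad_def)
qed

section \<open>Rectangular permutations as lists\<close>

lemma contains_pattern_iff_subseq:
  "contains_pattern n s tau \<longleftrightarrow>
     (\<exists>zs. subseq zs (map s [1..<Suc n]) \<and> length zs = length tau \<and>
        (\<forall>i<length tau. \<forall>j<length tau. zs ! i < zs ! j \<longleftrightarrow> tau ! i < tau ! j))"
    (is "_ \<longleftrightarrow> (\<exists>zs. ?subseq zs \<and> ?pattern zs)")
proof
  assume "contains_pattern n s tau"
  then obtain idx where idx: "strict_mono_on {..<length tau} idx" "idx ` {..<length tau} \<subseteq> {1..n}"
    "\<forall>a<length tau. \<forall>b<length tau. s (idx a) < s (idx b) \<longleftrightarrow> tau ! a < tau ! b"
    unfolding contains_pattern_def by blast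
  define ps where "ps = map idx [0..<length tau]"
  have "subseq ps [1..<Suc n]"
  proof (rule sorted_subset_imp_subseq)
    show "set ps \<subseteq> set [1..<Suc n]" using idx(2) by (force simp: ps_def simp del: upt_Suc)
    show "sorted_wrt (<) ps"
      using idx(1) by (auto simp: ps_def sorted_wrt_iff_nth_less strict_mono_on_def)
  qed (simp del: upt_Suc)
  then have "?subseq (map s ps)" by (rule subseq_map)
  moreover have "?pattern (map s ps)" using idx(3) by (simp add: ps_def)
  ultimately show "\<exists>zs. ?subseq zs \<and> ?pattern zs" by blast
next
  assume "\<exists>zs. ?subseq zs \<and> ?pattern zs"
  then obtain zs where zs: "?subseq zs" "?pattern zs" by blast
  then obtain ps where ps: "subseq ps [1..<Suc n]" "zs = map s ps" by (auto elim: subseq_mapE)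
  have "sorted_wrt (<) ps"
    using ps(1) by (simp add: sorted_wrt_subseq del: upt_Suc)
  moreover have "set ps \<subseteq> {1..n}" using subseq_set_subset[OF ps(1)] by auto
  ultimately show "contains_pattern n s tau"
    unfolding contains_pattern_def using zs(2) ps(2)
    by (intro exI[of _ "(!) ps"]) (auto simp: strict_mono_on_def sorted_wrt_iff_nth_less)
qed

lemma contains_pattern_length_4_iff:
  assumes "length tau = 4"
  shows "contains_pattern n s tau \<longleftrightarrow>
    (\<exists>a b c d. subseq [a, b, c, d] (map s [1..<Suc n]) \<and>
       (\<forall>i<4. \<forall>j<4. [a, b, c, d] ! i < [a, b, c, d] ! j \<longleftrightarrow> tau ! i < tau ! j))"
  unfolding contains_pattern_iff_subseq assms
  by (auto simp: length_Suc_conv numeral_eq_Suc simp del: upt_Suc)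

lemma all_less_4: "(\<forall>i<4::nat. P i) \<longleftrightarrow> P 0 \<and> P 1 \<and> P 2 \<and> (P 3 :: bool)"
  by (auto simp: numeral_eq_Suc less_Suc_eq)

lemma forbidden_quad_iff_patterns:
  "forbidden_quad a b c d \<longleftrightarrow>
    (\<exists>tau\<in>{[2,4,1,3], [2,4,3,1], [4,2,1,3], [4,2,3,1]}.
       \<forall>i<4. \<forall>j<4. [a, b, c, d] ! i < [a, b, c, d] ! j \<longleftrightarrow> tau ! i < (tau ! j :: nat))"
  (is "_ \<longleftrightarrow> (\<exists>tau\<in>_. ?order tau)")
proof -
  have "?order [2,4,1,3] \<longleftrightarrow> c < a \<and> a < d \<and> d < b"
    and "?order [2,4,3,1] \<longleftrightarrow> d < a \<and> a < c \<and> c < b"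
    and "?order [4,2,1,3] \<longleftrightarrow> c < b \<and> b < d \<and> d < a"
    and "?order [4,2,3,1] \<longleftrightarrow> d < b \<and> b < c \<and> c < a"
    unfolding all_less_4 by auto
  then show ?thesis unfolding forbidden_quad_def by auto
qed

lemma rectangular_iff_rect_list: "rectangular n s \<longleftrightarrow> rect_list (map s [1..<Suc n])"
  unfolding rectangular_def rect_list_def forbidden_quad_iff_patterns
  by (auto simp: contains_pattern_length_4_iff simp del: upt_Suc)

definition rect_lists :: "nat \<Rightarrow> nat list set" where
  "rect_lists n = {xs. distinct xs \<and> set xs = {1..n} \<and> rect_list xs}"

lemma length_rect_lists: "xs \<in> rect_lists n \<Longrightarrow> length xs = n"
  using distinct_card[of xs] by (auto simp: rect_lists_def)

lemma finite_rect_lists: "finite (rect_lists n)"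
proof (rule finite_subset)
  show "rect_lists n \<subseteq> {xs. set xs \<subseteq> {1..n} \<and> length xs = n}"
    using length_rect_lists by (auto simp: rect_lists_def)
qed (simp add: finite_lists_length_eq)

definition perm_of_list :: "nat list \<Rightarrow> nat \<Rightarrow> nat" where
  "perm_of_list xs i = (if i \<in> {1..length xs} then xs ! (i - 1) else i)"

lemma map_perm_of_list: "map (perm_of_list xs) [1..<Suc (length xs)] = xs"
  by (rule nth_equalityI) (simp_all add: perm_of_list_def del: upt_Suc)

lemma perm_of_list_map:
  assumes "s permutes {1..n}"
  shows "perm_of_list (map s [1..<Suc n]) = s"
proof
  fix i
  show "perm_of_list (map s [1..<Suc n]) i = s i"
  proof (cases "i \<in> {1..n}")
    case True
    then have "i - 1 < n" by auto
    with True show ?thesis by (simp add: perm_of_list_def del: upt_Suc)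
  next
    case False
    then show ?thesis using permutes_not_in[OF assms, of i] by (auto simp: perm_of_list_def)
  qed
qed

lemma set_upt_Suc_1: "set [1..<Suc n] = {1..n}"
  by (simp only: set_upt atLeastLessThanSuc_atLeastAtMost)

lemma map_rect_perm_in_rect_lists:
  assumes "s \<in> rect_perms n"
  shows "map s [1..<Suc n] \<in> rect_lists n"
proof -
  have s: "s permutes {1..n}" "rectangular n s" using assms unfolding rect_perms_def by blast+
  have "distinct (map s [1..<Suc n])"
    using permutes_inj_on[OF s(1)] by (simp only: distinct_map set_upt_Suc_1 distinct_upt)
  moreover have "set (map s [1..<Suc n]) = {1..n}"
    using permutes_image[OF s(1)] by (simp only: set_map set_upt_Suc_1)
  ultimately show ?thesis using s(2) by (simp add: rect_lists_def rectangular_iff_rect_list)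
qed

lemma perm_of_rect_list_in_rect_perms:
  assumes "xs \<in> rect_lists n"
  shows "perm_of_list xs \<in> rect_perms n"
proof -
  have len: "length xs = n" using assms by (rule length_rect_lists)
  have xs: "map (perm_of_list xs) [1..<Suc n] = xs" using map_perm_of_list[of xs] by (simp only: len)
  have "distinct xs" "set xs = {1..n}" using assms by (simp_all add: rect_lists_def)
  then have "distinct (map (perm_of_list xs) [1..<Suc n])"
    and "set (map (perm_of_list xs) [1..<Suc n]) = {1..n}"
    by (simp_all only: xs)
  then have "bij_betw (perm_of_list xs) {1..n} {1..n}"
    by (simp only: bij_betw_def distinct_map set_map set_upt_Suc_1)
  then have "perm_of_list xs permutes {1..n}"
    by (rule bij_imp_permutes) (auto simp: perm_of_list_def len)
  moreover have "rectangular n (perm_of_list xs)"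
    using assms unfolding rectangular_iff_rect_list xs by (simp add: rect_lists_def)
  ultimately show ?thesis by (simp add: rect_perms_def)
qed

lemma bij_betw_rect_perms_rect_lists:
  "bij_betw (\<lambda>s. map s [1..<Suc n]) (rect_perms n) (rect_lists n)"
proof (rule bij_betw_byWitness[where f' = perm_of_list])
  show "\<forall>s\<in>rect_perms n. perm_of_list (map s [1..<Suc n]) = s"
    using perm_of_list_map unfolding rect_perms_def by blast
  show "\<forall>xs\<in>rect_lists n. map (perm_of_list xs) [1..<Suc n] = xs"
  proof
    fix xs assume "xs \<in> rect_lists n"
    then have "n = length xs" by (simp add: length_rect_lists)
    then show "map (perm_of_list xs) [1..<Suc n] = xs" by (simp only: map_perm_of_list)
  qed
qed (use map_rect_perm_in_rect_lists perm_of_rect_list_in_rect_perms in blast)+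

section \<open>Position of the maximum\<close>

definition suffix_after :: "'a \<Rightarrow> 'a list \<Rightarrow> 'a list" where
  "suffix_after m xs = tl (dropWhile (\<lambda>v. v \<noteq> m) xs)"

definition insert_after :: "'a \<Rightarrow> 'a \<Rightarrow> 'a list \<Rightarrow> 'a list" where
  "insert_after m x xs = takeWhile (\<lambda>v. v \<noteq> m) xs @ m # x # suffix_after m xs"

lemma suffix_after_split: "m \<notin> set L \<Longrightarrow> suffix_after m (L @ m # R) = R"
  by (induction L) (auto simp: suffix_after_def)

lemma insert_after_split: "m \<notin> set L \<Longrightarrow> insert_after m x (L @ m # R) = L @ m # x # R"
  by (induction L) (auto simp: insert_after_def suffix_after_def)

definition rect_lists_after_max :: "nat \<Rightarrow> (nat list \<Rightarrow> bool) \<Rightarrow> nat list set" where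
  "rect_lists_after_max n P = {xs \<in> rect_lists n. P (suffix_after n xs)}"

lemma rect_lists_after_max_True: "rect_lists_after_max n (\<lambda>_. True) = rect_lists n"
  by (simp add: rect_lists_after_max_def)

lemma finite_rect_lists_after_max: "finite (rect_lists_after_max n P)"
  using finite_rect_lists by (simp add: rect_lists_after_max_def)

lemma card_rect_lists_after_max_split:
  "card (rect_lists_after_max n P) =
     card (rect_lists_after_max n (\<lambda>R. P R \<and> Q R)) + card (rect_lists_after_max n (\<lambda>R. P R \<and> \<not> Q R))"
proof -
  have "rect_lists_after_max n P =
      rect_lists_after_max n (\<lambda>R. P R \<and> Q R) \<union> rect_lists_after_max n (\<lambda>R. P R \<and> \<not> Q R)"
    by (auto simp: rect_lists_after_max_def)
  also have "card \<dots> =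
      card (rect_lists_after_max n (\<lambda>R. P R \<and> Q R)) + card (rect_lists_after_max n (\<lambda>R. P R \<and> \<not> Q R))"
    by (rule card_Un_disjoint[OF finite_rect_lists_after_max finite_rect_lists_after_max])
      (auto simp: rect_lists_after_max_def)
  finally show ?thesis .
qed

lemma rect_lists_split_at_max:
  assumes "xs \<in> rect_lists n" "1 \<le> n"
  obtains L R where "xs = L @ n # R" "n \<notin> set L" "n \<notin> set R" "suffix_after n xs = R"
proof -
  have "n \<in> set xs" using assms by (simp add: rect_lists_def)
  then obtain L R where "xs = L @ n # R" by (meson split_list)
  moreover have "distinct xs" using assms(1) by (simp add: rect_lists_def)
  ultimately show thesis using that by (simp add: suffix_after_split)
qed

lemma atLeastAtMost_1_diff_top: "{1..n} - {n} = {1..n - 1 :: nat}"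
  by (cases n) auto

lemma insert_top_atLeastAtMost_1: "1 \<le> n \<Longrightarrow> insert n {1..n - 1} = {1..n :: nat}"
  by (cases n) auto

lemma set_take_Cons_drop: "set (take p xs @ x # drop p xs) = insert x (set xs)"
  by (metis Un_insert_right append_take_drop_id list.simps(15) set_append)

lemma distinct_take_Cons_drop:
  "distinct xs \<Longrightarrow> x \<notin> set xs \<Longrightarrow> distinct (take p xs @ x # drop p xs)"
  by (metis append_take_drop_id distinct_append distinct.simps(2) disjoint_insert(1)
      list.simps(15) set_append Un_iff)

lemma removeAll_max_in_rect_lists:
  assumes "xs \<in> rect_lists n" "1 \<le> n"
  shows "removeAll n xs \<in> rect_lists (n - 1)"
proof -
  obtain L R where xs: "xs = L @ n # R" "n \<notin> set L" "n \<notin> set R"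
    using rect_lists_split_at_max[OF assms] by blast
  have "distinct xs" "set xs = {1..n}" "rect_list xs" using assms(1) by (simp_all add: rect_lists_def)
  then have "distinct (L @ R)" "set (L @ R) = {1..n} - {n}" "rect_list (L @ R)"
    using xs rect_list_remove by auto
  moreover have "removeAll n xs = L @ R" using xs by simp
  ultimately show ?thesis by (simp add: rect_lists_def atLeastAtMost_1_diff_top del: One_nat_def)
qed

lemma insert_max_in_rect_lists:
  assumes "ys \<in> rect_lists (n - 1)" "j \<le> 1" "j < n"
  shows "take (n - 1 - j) ys @ n # drop (n - 1 - j) ys \<in> rect_lists_after_max n (\<lambda>R. length R = j)"
proof -
  let ?L = "take (n - 1 - j) ys" and ?R = "drop (n - 1 - j) ys"
  have ys: "distinct ys" "set ys = {1..n - 1}" "rect_list ys" "length ys = n - 1"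
    using assms(1) length_rect_lists by (auto simp: rect_lists_def)
  have sub: "set ?L \<subseteq> set ys" "set ?R \<subseteq> set ys" by (simp_all add: set_take_subset set_drop_subset)
  have "\<forall>v\<in>set ys. v < n" using ys(2) assms(3) by auto
  then have small: "\<forall>v\<in>set ?L. v < n" "n \<notin> set ys"
    using sub(1) by blast+
  have "rect_list (?L @ n # ?R)"
    using ys(3) small(1) assms(2) ys(4) by (intro rect_list_insert_max) auto
  moreover have "distinct (?L @ n # ?R)"
    using ys(1) small(2) by (rule distinct_take_Cons_drop)
  moreover have "set (?L @ n # ?R) = {1..n}"
    using insert_top_atLeastAtMost_1 assms(3) by (simp only: set_take_Cons_drop ys(2))
  moreover have "suffix_after n (?L @ n # ?R) = ?R"
    using small(2) sub by (auto intro: suffix_after_split)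
  ultimately show ?thesis
    using ys(4) assms(3) by (simp add: rect_lists_def rect_lists_after_max_def)
qed

lemma card_rect_lists_after_max_short:
  assumes "j \<le> 1" "j < n"
  shows "card (rect_lists_after_max n (\<lambda>R. length R = j)) = card (rect_lists (n - 1))"
proof -
  let ?insert = "\<lambda>ys. take (n - 1 - j) ys @ n # drop (n - 1 - j) ys"
  have "bij_betw ?insert (rect_lists (n - 1)) (rect_lists_after_max n (\<lambda>R. length R = j))"
  proof (rule bij_betw_byWitness[where f' = "removeAll n"])
    show "\<forall>ys\<in>rect_lists (n - 1). removeAll n (?insert ys) = ys"
    proof
      fix ys assume "ys \<in> rect_lists (n - 1)"
      then have "n \<notin> set ys" using assms(2) by (auto simp: rect_lists_def)
      then have "n \<notin> set (take (n - 1 - j) ys)" "n \<notin> set (drop (n - 1 - j) ys)"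
        by (auto dest: in_set_takeD in_set_dropD)
      then show "removeAll n (?insert ys) = ys" by simp
    qed
    show "\<forall>xs\<in>rect_lists_after_max n (\<lambda>R. length R = j). ?insert (removeAll n xs) = xs"
    proof
      fix xs assume xs: "xs \<in> rect_lists_after_max n (\<lambda>R. length R = j)"
      then have "xs \<in> rect_lists n" by (simp add: rect_lists_after_max_def)
      then obtain L R where LR: "xs = L @ n # R" "n \<notin> set L" "n \<notin> set R" "suffix_after n xs = R"
        using rect_lists_split_at_max[of xs n] assms(2) by auto
      then have "length R = j" "length L + 1 + length R = n"
        using xs length_rect_lists[OF \<open>xs \<in> rect_lists n\<close>] by (auto simp: rect_lists_after_max_def)
      then show "?insert (removeAll n xs) = xs" using LR by simp
    qed
  qed (use removeAll_max_in_rect_lists insert_max_in_rect_lists assms in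
        \<open>auto simp: rect_lists_after_max_def\<close>)
  then show ?thesis by (simp add: bij_betw_same_card)
qed

section \<open>Deleting the entry after the maximum\<close>

definition open_gap :: "nat \<Rightarrow> nat \<Rightarrow> nat" where
  "open_gap x v = (if x \<le> v then Suc v else v)"

definition close_gap :: "nat \<Rightarrow> nat \<Rightarrow> nat" where
  "close_gap x v = (if x < v then v - 1 else v)"

lemma close_open_gap [simp]: "close_gap x (open_gap x v) = v"
  by (simp add: open_gap_def close_gap_def)

lemma open_close_gap: "v \<noteq> x \<Longrightarrow> open_gap x (close_gap x v) = v"
  by (auto simp: open_gap_def close_gap_def)

lemma open_gap_neq [simp]: "open_gap x v \<noteq> x" "x \<noteq> open_gap x v"
  by (simp_all add: open_gap_def)

lemma strict_mono_open_gap: "strict_mono (open_gap x)"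
  by (auto simp: strict_mono_def open_gap_def)

lemma strict_mono_on_close_gap: "strict_mono_on (- {x}) (close_gap x)"
  by (auto simp: strict_mono_on_def close_gap_def)

lemma open_gap_image:
  assumes "1 \<le> x" "x \<le> Suc k"
  shows "open_gap x ` {1..k} = {1..Suc k} - {x}"
proof
  show "open_gap x ` {1..k} \<subseteq> {1..Suc k} - {x}"
    using assms by (auto simp: open_gap_def)
  show "{1..Suc k} - {x} \<subseteq> open_gap x ` {1..k}"
  proof
    fix v assume v: "v \<in> {1..Suc k} - {x}"
    show "v \<in> open_gap x ` {1..k}"
    proof (cases "v < x")
      case True
      then have "open_gap x v = v" "v \<in> {1..k}" using v assms by (auto simp: open_gap_def)
      then show ?thesis by (metis imageI)
    next
      case False
      then have "open_gap x (v - 1) = v" "v - 1 \<in> {1..k}" using v assms by (auto simp: open_gap_def)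
      then show ?thesis by (metis imageI)
    qed
  qed
qed

lemma close_gap_image:
  assumes "1 \<le> x" "x \<le> Suc k"
  shows "close_gap x ` ({1..Suc k} - {x}) = {1..k}"
proof -
  have "close_gap x ` ({1..Suc k} - {x}) = close_gap x ` open_gap x ` {1..k}"
    by (simp only: open_gap_image[OF assms])
  also have "\<dots> = {1..k}" by (simp add: image_image)
  finally show ?thesis .
qed

text \<open>The flag records on which side of \<open>x\<close> the rest of the suffix lies; this is what
  lets \<open>insert_after_max\<close> recover \<open>x\<close> from the standardised suffix.\<close>

definition delete_after_max :: "nat \<Rightarrow> nat list \<Rightarrow> bool \<times> nat list" where
  "delete_after_max k xs =
     (let R = suffix_after (Suc k) xs; x = hd R
      in (x < hd (tl R), map (close_gap x) (removeAll x xs)))"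

definition insert_after_max :: "nat \<Rightarrow> bool \<times> nat list \<Rightarrow> nat list" where
  "insert_after_max k p =
     (let R = suffix_after k (snd p); x = if fst p then Min (set R) else Suc (Max (set R))
      in insert_after (Suc k) x (map (open_gap x) (snd p)))"

lemma delete_after_max_split:
  assumes "distinct (L @ Suc k # x # R)"
  shows "delete_after_max k (L @ Suc k # x # R) = (x < hd R, map (close_gap x) (L @ Suc k # R))"
  using assms by (simp add: delete_after_max_def suffix_after_split)

lemma insert_after_max_split:
  assumes "k \<notin> set L" "x \<le> k" "x = (if b then Min (set R) else Suc (Max (set R)))"
  shows "insert_after_max k (b, L @ k # R) = map (open_gap x) L @ Suc k # x # map (open_gap x) R"
proof -
  have "open_gap x k = Suc k" using assms(2) by (simp add: open_gap_def)
  moreover have "Suc k \<notin> set (map (open_gap x) L)"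
    using assms(1) calculation strict_mono_eq[OF strict_mono_open_gap] by fastforce
  moreover have "insert_after_max k (b, L @ k # R) = insert_after (Suc k) x (map (open_gap x) (L @ k # R))"
    using assms(1,3) by (simp add: insert_after_max_def suffix_after_split Let_def)
  ultimately show ?thesis by (simp add: insert_after_split)
qed

lemma rect_lists_successor_of_max_separated:
  assumes "L @ Suc k # x # R \<in> rect_lists (Suc k)"
  shows "1 \<le> x" "x \<le> k" "\<forall>r\<in>set R. 1 \<le> r \<and> r \<le> k"
    and "\<forall>r1\<in>set R. \<forall>r2\<in>set R. \<not> (r1 < x \<and> x < r2)"
    and "\<forall>v\<in>set L. \<forall>r1\<in>set (x # R). \<forall>r2\<in>set (x # R). \<not> (r1 < v \<and> v < r2)"
proof -
  have d: "distinct (L @ Suc k # x # R)" and s: "set (L @ Suc k # x # R) = {1..Suc k}"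
    and r: "rect_list (L @ Suc k # x # R)"
    using assms by (simp_all add: rect_lists_def)
  then have bounds: "\<forall>r\<in>set (x # R). 1 \<le> r \<and> r \<le> k"
    by (auto simp: set_eq_iff) (metis le_Suc_eq)+
  then show "1 \<le> x" "x \<le> k" "\<forall>r\<in>set R. 1 \<le> r \<and> r \<le> k" by simp_all
  show "\<forall>r1\<in>set R. \<forall>r2\<in>set R. \<not> (r1 < x \<and> x < r2)"
    using rect_list_after_max_one_side[OF r] bounds by (simp add: le_imp_less_Suc)
  show "\<forall>v\<in>set L. \<forall>r1\<in>set (x # R). \<forall>r2\<in>set (x # R). \<not> (r1 < v \<and> v < r2)"
    using rect_list_between_after_max[of L "Suc k" "x # R"] r bounds by (simp add: le_imp_less_Suc)
qed

lemma successor_of_max_eq_Min: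
  assumes "L @ Suc k # x # R \<in> rect_lists (Suc k)" "R \<noteq> []" "x < hd R"
  shows "Min (set (map (close_gap x) R)) = x"
proof -
  note shape = rect_lists_successor_of_max_separated[OF assms(1)]
  have d: "distinct (L @ Suc k # x # R)" and s: "set (L @ Suc k # x # R) = {1..Suc k}"
    using assms(1) by (simp_all add: rect_lists_def)
  have hd: "hd R \<in> set R" using assms(2) by simp
  have above: "\<forall>r\<in>set R. x < r"
    using shape(4) hd d assms(3) by (metis distinct.simps(2) distinct_append linorder_neqE_nat)
  have "Suc x \<in> set R"
  proof -
    have "Suc x \<notin> set L"
    proof
      assume L: "Suc x \<in> set L"
      then have "Suc x \<noteq> hd R" using d hd by auto
      then show False using shape(5) L hd assms(3) by force
    qed
    moreover have "Suc x \<in> set (L @ Suc k # x # R)"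
      using shape(2,3) hd assms(3) by (simp only: s) auto
    moreover have "Suc x \<noteq> Suc k" using shape(3) hd assms(3) by auto
    ultimately show ?thesis by simp
  qed
  then show ?thesis
    using above by (intro Min_eqI) (auto simp: close_gap_def rev_image_eqI)
qed

lemma successor_of_max_eq_Suc_Max:
  assumes "L @ Suc k # x # R \<in> rect_lists (Suc k)" "R \<noteq> []" "hd R < x"
  shows "Suc (Max (set (map (close_gap x) R))) = x"
proof -
  note shape = rect_lists_successor_of_max_separated[OF assms(1)]
  have d: "distinct (L @ Suc k # x # R)" and s: "set (L @ Suc k # x # R) = {1..Suc k}"
    using assms(1) by (simp_all add: rect_lists_def)
  have hd: "hd R \<in> set R" using assms(2) by simp
  have below: "\<forall>r\<in>set R. r < x"
    using shape(4) hd d assms(3) by (metis distinct.simps(2) distinct_append linorder_neqE_nat)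
  have "2 \<le> x" using shape(3) hd assms(3) by fastforce
  have "x - 1 \<in> set R"
  proof -
    have "x - 1 \<notin> set L"
    proof
      assume L: "x - 1 \<in> set L"
      then have "x - 1 \<noteq> hd R" using d hd by auto
      then show False using shape(5) L hd assms(3) \<open>2 \<le> x\<close> by force
    qed
    moreover have "x - 1 \<in> set (L @ Suc k # x # R)"
      using shape(2) \<open>2 \<le> x\<close> by (simp only: s) auto
    moreover have "x - 1 \<noteq> Suc k" "x - 1 \<noteq> x" using shape(2) \<open>2 \<le> x\<close> by auto
    ultimately show ?thesis by simp
  qed
  then have "Max (set (map (close_gap x) R)) = x - 1"
    using below by (intro Max_eqI) (auto simp: close_gap_def rev_image_eqI)
  then show ?thesis using \<open>2 \<le> x\<close> by simp
qed

lemma delete_after_max_eq: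
  assumes "L @ Suc k # x # R \<in> rect_lists (Suc k)"
  shows "delete_after_max k (L @ Suc k # x # R) = (x < hd R, map (close_gap x) L @ k # map (close_gap x) R)"
    and "k \<notin> set (map (close_gap x) L)"
proof -
  have d: "distinct (L @ Suc k # x # R)" using assms by (simp add: rect_lists_def)
  have "x \<le> k" using rect_lists_successor_of_max_separated[OF assms] by simp
  then have k: "close_gap x (Suc k) = k" by (simp add: close_gap_def)
  then show "delete_after_max k (L @ Suc k # x # R) = (x < hd R, map (close_gap x) L @ k # map (close_gap x) R)"
    using delete_after_max_split[OF d] by simp
  have "close_gap x u \<noteq> close_gap x (Suc k)" if "u \<in> set L" for u
    using that d strict_mono_on_eq[OF strict_mono_on_close_gap[of x], of u "Suc k"] by auto
  then show "k \<notin> set (map (close_gap x) L)" using k by auto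
qed

lemma insert_delete_after_max:
  assumes "L @ Suc k # x # R \<in> rect_lists (Suc k)" "R \<noteq> []"
  shows "insert_after_max k (delete_after_max k (L @ Suc k # x # R)) = L @ Suc k # x # R"
proof -
  have d: "distinct (L @ Suc k # x # R)" using assms by (simp add: rect_lists_def)
  have "hd R \<noteq> x" using assms(2) d by (metis distinct.simps(2) distinct_append list.set_sel(1))
  then have "x = (if x < hd R then Min (set (map (close_gap x) R)) else Suc (Max (set (map (close_gap x) R))))"
    using successor_of_max_eq_Min[OF assms] successor_of_max_eq_Suc_Max[OF assms] by auto
  moreover have "map (open_gap x) (map (close_gap x) ys) = ys" if "x \<notin> set ys" for ys
    using that by (induction ys) (auto simp: open_close_gap)
  ultimately show ?thesis
    using d rect_lists_successor_of_max_separated(2)[OF assms(1)] delete_after_max_eq[OF assms(1)]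
    by (simp add: insert_after_max_split)
qed

lemma delete_after_max_mem:
  assumes "L @ Suc k # x # R \<in> rect_lists (Suc k)" "R \<noteq> []"
  shows "snd (delete_after_max k (L @ Suc k # x # R)) \<in> rect_lists_after_max k (\<lambda>R. R \<noteq> [])"
proof -
  let ?ys = "L @ Suc k # R"
  have d: "distinct (L @ Suc k # x # R)" and s: "set (L @ Suc k # x # R) = {1..Suc k}"
    and r: "rect_list (L @ Suc k # x # R)"
    using assms(1) by (simp_all add: rect_lists_def)
  have x: "1 \<le> x" "x \<le> Suc k" using rect_lists_successor_of_max_separated[OF assms(1)] by simp_all
  have ys: "set ?ys = {1..Suc k} - {x}" using d s by auto
  then have "set ?ys \<subseteq> - {x}" by blast
  then have mono: "strict_mono_on (set ?ys) (close_gap x)"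
    by (rule monotone_on_subset[OF strict_mono_on_close_gap])
  have "distinct ?ys" using d by simp
  moreover have "inj_on (close_gap x) (set ?ys)" using mono by (rule strict_mono_on_imp_inj_on)
  ultimately have "distinct (map (close_gap x) ?ys)" unfolding distinct_map by blast
  moreover have "set (map (close_gap x) ?ys) = {1..k}"
    by (simp only: set_map ys close_gap_image[OF x])
  moreover have "rect_list ?ys" using r rect_list_remove[of "L @ [Suc k]" x R] by simp
  then have "rect_list (map (close_gap x) ?ys)" using mono by (simp only: rect_list_map)
  moreover have "map (close_gap x) ?ys = map (close_gap x) L @ k # map (close_gap x) R"
    using rect_lists_successor_of_max_separated(2)[OF assms(1)] by (simp add: close_gap_def)
  ultimately show ?thesis
    using assms(2) delete_after_max_eq[OF assms(1)]
    by (simp add: rect_lists_def rect_lists_after_max_def suffix_after_split)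
qed

lemma reinserted_successor:
  assumes "L @ k # R \<in> rect_lists k" "R \<noteq> []" "x = (if b then Min (set R) else Suc (Max (set R)))"
  shows "1 \<le> x" "x \<le> k" "b \<longleftrightarrow> x < open_gap x (hd R)"
    and "(\<forall>r\<in>set R. x \<le> r) \<or> (\<forall>r\<in>set R. r < x)"
proof -
  have "distinct (L @ k # R)" "set (L @ k # R) = {1..k}" using assms(1) by (simp_all add: rect_lists_def)
  then have R: "\<forall>r\<in>set R. 1 \<le> r \<and> r < k" by (auto simp: set_eq_iff) (metis le_neq_implies_less)+
  have "Min (set R) \<in> set R" "Max (set R) \<in> set R" "hd R \<in> set R" using assms(2) by simp_all
  then show "1 \<le> x" "x \<le> k" using R assms(3) by (auto simp: Suc_le_eq)
  show "b \<longleftrightarrow> x < open_gap x (hd R)"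
  proof -
    have "Min (set R) \<le> hd R" "hd R \<le> Max (set R)" using \<open>hd R \<in> set R\<close> by simp_all
    then show ?thesis using assms(3) by (auto simp: open_gap_def)
  qed
  show "(\<forall>r\<in>set R. x \<le> r) \<or> (\<forall>r\<in>set R. r < x)"
    using assms(3) by (auto simp: less_Suc_eq_le)
qed

lemma insert_after_max_eq:
  assumes "L @ k # R \<in> rect_lists k" "R \<noteq> []" "x = (if b then Min (set R) else Suc (Max (set R)))"
  shows "insert_after_max k (b, L @ k # R) = map (open_gap x) L @ Suc k # x # map (open_gap x) R"
    and "distinct (map (open_gap x) L @ Suc k # x # map (open_gap x) R)"
proof -
  have d: "distinct (L @ k # R)" using assms(1) by (simp add: rect_lists_def)
  have x: "x \<le> k" using reinserted_successor[OF assms] by simp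
  then show "insert_after_max k (b, L @ k # R) = map (open_gap x) L @ Suc k # x # map (open_gap x) R"
    using d assms(3) by (simp add: insert_after_max_split)
  have "open_gap x k = Suc k" using x by (simp add: open_gap_def)
  moreover have "inj_on (open_gap x) (set (L @ k # R))"
    by (meson inj_on_subset strict_mono_imp_inj_on strict_mono_open_gap subset_UNIV)
  with d have "distinct (map (open_gap x) (L @ k # R))" unfolding distinct_map by blast
  ultimately show "distinct (map (open_gap x) L @ Suc k # x # map (open_gap x) R)"
    using x by auto
qed

lemma delete_insert_after_max:
  assumes "L @ k # R \<in> rect_lists k" "R \<noteq> []"
  shows "delete_after_max k (insert_after_max k (b, L @ k # R)) = (b, L @ k # R)"
proof -
  define x where "x = (if b then Min (set R) else Suc (Max (set R)))"
  note x = reinserted_successor[OF assms x_def] insert_after_max_eq[OF assms x_def]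
  have "close_gap x (Suc k) = k" using x(2) by (simp add: close_gap_def)
  then show ?thesis
    using x(3) x(5,6) assms(2) by (simp add: delete_after_max_split hd_map comp_def)
qed

lemma reinserted_successor_gap:
  assumes "L @ k # R \<in> rect_lists k" "R \<noteq> []" "x = (if b then Min (set R) else Suc (Max (set R)))"
    and "v \<in> set (map (open_gap x) L @ [Suc k])" "w \<in> set (map (open_gap x) R)"
  shows "\<not> (x < v \<and> v < w) \<and> \<not> (w < v \<and> v < x)"
proof -
  have d: "distinct (L @ k # R)" and s: "set (L @ k # R) = {1..k}" and r: "rect_list (L @ k # R)"
    using assms(1) by (simp_all add: rect_lists_def)
  then have R: "\<forall>r\<in>set R. r < k" by (auto simp: set_eq_iff) (metis le_neq_implies_less)
  have between: "\<not> (r1 < u \<and> u < r2)" if "u \<in> set L" "r1 \<in> set R" "r2 \<in> set R" for u r1 r2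
    using rect_list_between_after_max[OF r R that] .
  obtain r where r: "r \<in> set R" "w = open_gap x r" using assms(5) by auto
  have "x \<le> k" using reinserted_successor[OF assms(1-3)] by simp
  show ?thesis
  proof (cases "v = Suc k")
    case True
    then show ?thesis using r R \<open>x \<le> k\<close> by (auto simp: open_gap_def)
  next
    case False
    then obtain u where u: "u \<in> set L" "v = open_gap x u" using assms(4) by auto
    have disjoint: "u \<notin> set R" using d u(1) by auto
    show ?thesis
    proof (cases b)
      case True
      then have "x \<in> set R" "x \<le> r" using assms(2,3) r(1) by simp_all
      then show ?thesis
        using between[OF u(1) \<open>x \<in> set R\<close> r(1)] disjoint u r by (auto simp: open_gap_def)
    next
      case False
      define M where "M = Max (set R)"
      then have "M \<in> set R" "r \<le> M" "x = Suc M" using False assms(2,3) r(1) by simp_all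
      moreover have "u \<noteq> M" using disjoint \<open>M \<in> set R\<close> by auto
      ultimately show ?thesis
        using between[OF u(1) r(1) \<open>M \<in> set R\<close>] u r by (auto simp: open_gap_def)
    qed
  qed
qed

lemma insert_after_max_mem:
  assumes "L @ k # R \<in> rect_lists k" "R \<noteq> []"
  shows "insert_after_max k (b, L @ k # R) \<in> rect_lists_after_max (Suc k) (\<lambda>R. 2 \<le> length R)"
proof -
  define x where "x = (if b then Min (set R) else Suc (Max (set R)))"
  note x = reinserted_successor[OF assms x_def] and ins = insert_after_max_eq[OF assms x_def]
  let ?A = "map (open_gap x) L @ [Suc k]" and ?B = "map (open_gap x) R"
  have "set (L @ k # R) = {1..k}" "rect_list (L @ k # R)" using assms(1) by (simp_all add: rect_lists_def)
  have AB: "?A @ ?B = map (open_gap x) (L @ k # R)" using x(2) by (simp add: open_gap_def)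
  have "rect_list (?A @ x # ?B)"
  proof (rule rect_list_insert_one_sided)
    show "rect_list (?A @ ?B)" unfolding AB using \<open>rect_list (L @ k # R)\<close>
      by (rule rect_list_map[OF monotone_on_subset[OF strict_mono_open_gap subset_UNIV]])
    show "set ?A \<inter> set ?B = {}" "x \<notin> set ?A" using ins(2) by auto
    show "(\<forall>w\<in>set ?B. x < w) \<or> (\<forall>w\<in>set ?B. w < x)" using x(4) by (auto simp: open_gap_def)
  qed (use assms(2) x(2) reinserted_successor_gap[OF assms x_def] in auto)
  moreover have "set (?A @ x # ?B) = {1..Suc k}"
  proof -
    have "set (?A @ x # ?B) = insert x (open_gap x ` {1..k})"
      using AB \<open>set (L @ k # R) = {1..k}\<close> by (metis list.set(2) set_append set_map insert_commute
          Un_insert_right)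
    also have "\<dots> = insert x ({1..Suc k} - {x})"
      using x(1,2) by (subst open_gap_image) simp_all
    also have "\<dots> = {1..Suc k}" using x(1,2) by (intro insert_Diff) simp
    finally show ?thesis .
  qed
  moreover have "suffix_after (Suc k) (?A @ x # ?B) = x # ?B"
    using ins(2) suffix_after_split[of "Suc k" "map (open_gap x) L"] by simp
  ultimately show ?thesis
    using ins assms(2) by (simp add: rect_lists_def rect_lists_after_max_def Suc_le_eq)
qed

lemma rect_lists_after_max_nonemptyE:
  assumes "xs \<in> rect_lists_after_max n P" "\<And>R. P R \<Longrightarrow> R \<noteq> []"
  obtains L y R where "xs = L @ n # y # R" "xs \<in> rect_lists n" "P (y # R)"
proof -
  have xs: "xs \<in> rect_lists n" "P (suffix_after n xs)" using assms(1) by (simp_all add: rect_lists_after_max_def)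
  then have "xs \<noteq> []" using assms(2)[of "suffix_after n xs"] by (auto simp: suffix_after_def)
  then have "1 \<le> n" using xs(1) by (cases n) (auto simp: rect_lists_def)
  then obtain L R where "xs = L @ n # R" "suffix_after n xs = R"
    using rect_lists_split_at_max xs(1) by metis
  moreover from this obtain y R' where "R = y # R'" using xs(2) assms(2) by (cases R) auto
  ultimately show thesis using that xs by simp
qed

lemma card_rect_lists_after_max_long:
  "card (rect_lists_after_max (Suc k) (\<lambda>R. 2 \<le> length R)) =
     2 * card (rect_lists_after_max k (\<lambda>R. R \<noteq> []))"
proof -
  let ?T = "rect_lists_after_max (Suc k) (\<lambda>R. 2 \<le> length R)"
    and ?U = "rect_lists_after_max k (\<lambda>R. R \<noteq> [])"
  have T: "\<exists>L x R. xs = L @ Suc k # x # R \<and> xs \<in> rect_lists (Suc k) \<and> R \<noteq> []"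
    if xs: "xs \<in> ?T" for xs
  proof -
    obtain L x R where "xs = L @ Suc k # x # R" "xs \<in> rect_lists (Suc k)" "2 \<le> length (x # R)"
      by (rule rect_lists_after_max_nonemptyE[OF xs]) auto
    moreover from this have "R \<noteq> []" by auto
    ultimately show ?thesis by blast
  qed
  have U: "\<exists>L R. ys = L @ k # R \<and> ys \<in> rect_lists k \<and> R \<noteq> []" if "ys \<in> ?U" for ys
    by (rule rect_lists_after_max_nonemptyE[OF that]) auto
  have "bij_betw (delete_after_max k) ?T (UNIV \<times> ?U)"
  proof (rule bij_betw_byWitness[where f' = "insert_after_max k"])
    show "\<forall>xs\<in>?T. insert_after_max k (delete_after_max k xs) = xs"
      using T insert_delete_after_max by blast
    show "\<forall>p\<in>UNIV \<times> ?U. delete_after_max k (insert_after_max k p) = p"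
    proof clarify
      fix b ys assume "ys \<in> ?U"
      then show "delete_after_max k (insert_after_max k (b, ys)) = (b, ys)"
        using U delete_insert_after_max by blast
    qed
    show "delete_after_max k ` ?T \<subseteq> UNIV \<times> ?U"
    proof (rule image_subsetI)
      fix xs assume "xs \<in> ?T"
      then have "snd (delete_after_max k xs) \<in> ?U" using T delete_after_max_mem by blast
      then show "delete_after_max k xs \<in> UNIV \<times> ?U" by (simp add: mem_Times_iff)
    qed
    show "insert_after_max k ` (UNIV \<times> ?U) \<subseteq> ?T"
    proof clarify
      fix b ys assume "ys \<in> ?U"
      then show "insert_after_max k (b, ys) \<in> ?T" using U insert_after_max_mem by blast
    qed
  qed
  then have "card ?T = card ((UNIV :: bool set) \<times> ?U)" by (rule bij_betw_same_card)
  then show ?thesis by (simp add: card_cartesian_product)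
qed

section \<open>Closed walks on the path\<close>

definition P7_walks_4_to :: "nat \<Rightarrow> nat \<Rightarrow> nat list set" where
  "P7_walks_4_to l v = {w. P7_walk l w \<and> w ! 0 = 4 \<and> w ! l = v}"

lemma P7_walk_snoc:
  assumes "length u = Suc l"
  shows "P7_walk (Suc l) (u @ [v]) \<longleftrightarrow> P7_walk l u \<and> P7_adj (u ! l) v"
proof -
  have "(\<forall>j<Suc l. P7_adj ((u @ [v]) ! j) ((u @ [v]) ! (j + 1))) \<longleftrightarrow>
        P7_adj (u ! l) v \<and> (\<forall>j<l. P7_adj (u ! j) (u ! (j + 1)))"
    using assms by (simp add: All_less_Suc nth_append)
  moreover have "P7_adj a b \<Longrightarrow> b \<in> P7_vertices" for a b by (simp add: P7_adj_def)
  ultimately show ?thesis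
    using assms unfolding P7_walk_def by auto
qed

lemma P7_walks_4_to_0: "P7_walks_4_to 0 v = (if v = 4 then {[4]} else {})"
  by (auto simp: P7_walks_4_to_def P7_walk_def P7_vertices_def length_Suc_conv)

lemma P7_walks_4_to_outside: "v \<notin> P7_vertices \<Longrightarrow> P7_walks_4_to l v = {}"
  by (auto simp: P7_walks_4_to_def P7_walk_def) (metis lessI nth_mem subsetD)

lemma P7_walks_4_to_Suc:
  assumes "v \<in> P7_vertices"
  shows "P7_walks_4_to (Suc l) v =
    (\<lambda>u. u @ [v]) ` (P7_walks_4_to l (v - 1) \<union> P7_walks_4_to l (v + 1))"
proof (intro equalityI subsetI)
  fix w assume w: "w \<in> P7_walks_4_to (Suc l) v"
  then have len: "length w = Suc (Suc l)" by (simp add: P7_walks_4_to_def P7_walk_def)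
  define u where "u = butlast w"
  have "last w = v" using w len by (subst last_conv_nth) (auto simp: P7_walks_4_to_def)
  then have "w = u @ [v]" using len by (metis append_butlast_last_id list.size(3) nat.distinct(1) u_def)
  moreover have "length u = Suc l" using len by (simp add: u_def)
  ultimately have "P7_walk l u" "P7_adj (u ! l) v" "u ! 0 = 4"
    using w P7_walk_snoc by (auto simp: P7_walks_4_to_def nth_append)
  then have "u \<in> P7_walks_4_to l (v - 1) \<union> P7_walks_4_to l (v + 1)"
    by (auto simp: P7_walks_4_to_def P7_adj_def)
  then show "w \<in> (\<lambda>u. u @ [v]) ` (P7_walks_4_to l (v - 1) \<union> P7_walks_4_to l (v + 1))"
    using \<open>w = u @ [v]\<close> by blast
next
  fix w assume "w \<in> (\<lambda>u. u @ [v]) ` (P7_walks_4_to l (v - 1) \<union> P7_walks_4_to l (v + 1))"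
  then obtain u where w: "w = u @ [v]" and u: "u \<in> P7_walks_4_to l (v - 1) \<union> P7_walks_4_to l (v + 1)"
    by blast
  then have len: "length u = Suc l" and "P7_walk l u" "u ! 0 = 4"
    by (auto simp: P7_walks_4_to_def P7_walk_def)
  moreover have "u ! l \<in> P7_vertices"
    using len \<open>P7_walk l u\<close> by (auto simp: P7_walk_def)
  then have "P7_adj (u ! l) v"
    using u assms by (auto simp: P7_walks_4_to_def P7_adj_def P7_vertices_def)
  ultimately show "w \<in> P7_walks_4_to (Suc l) v"
    using w by (simp add: P7_walks_4_to_def P7_walk_snoc nth_append)
qed

fun walk_count :: "nat \<Rightarrow> nat \<Rightarrow> nat" where
  "walk_count 0 v = (if v = 4 then 1 else 0)"
| "walk_count (Suc l) v = (if v \<in> {1..7} then walk_count l (v - 1) + walk_count l (v + 1) else 0)"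

lemma finite_P7_walks_4_to: "finite (P7_walks_4_to l v)"
proof (rule finite_subset)
  show "P7_walks_4_to l v \<subseteq> {w. set w \<subseteq> P7_vertices \<and> length w = Suc l}"
    by (auto simp: P7_walks_4_to_def P7_walk_def)
qed (simp add: finite_lists_length_eq P7_vertices_def)

lemma card_P7_walks_4_to: "card (P7_walks_4_to l v) = walk_count l v"
proof (induction l arbitrary: v)
  case 0
  then show ?case by (simp add: P7_walks_4_to_0)
next
  case (Suc l)
  show ?case
  proof (cases "v \<in> P7_vertices")
    case True
    have "P7_walks_4_to l (v - 1) \<inter> P7_walks_4_to l (v + 1) = {}"
      by (auto simp: P7_walks_4_to_def)
    then have "card (P7_walks_4_to (Suc l) v) = walk_count l (v - 1) + walk_count l (v + 1)"
      unfolding P7_walks_4_to_Suc[OF True] Suc.IH[symmetric]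
      by (simp add: card_image inj_on_def card_Un_disjoint finite_P7_walks_4_to)
    then show ?thesis using True by (simp add: P7_vertices_def)
  next
    case False
    then show ?thesis by (auto simp: P7_walks_4_to_outside P7_vertices_def)
  qed
qed

lemma walk_count_step_4:
  "walk_count (Suc (Suc l)) 4 = 2 * walk_count l 4 + (walk_count l 2 + walk_count l 6)"
  by (simp add: numeral_eq_Suc)

lemma walk_count_step_2_6:
  "walk_count (Suc (Suc l)) 2 + walk_count (Suc (Suc l)) 6 =
     2 * walk_count l 4 + 2 * (walk_count l 2 + walk_count l 6)"
proof -
  have "walk_count l 0 = 0" "walk_count l 8 = 0" by (cases l; simp)+
  then show ?thesis by (simp add: numeral_eq_Suc)
qed

section \<open>The counting recurrences\<close>

lemma rect_lists_after_max_cong: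
  "(\<And>R. P R \<longleftrightarrow> Q R) \<Longrightarrow> rect_lists_after_max n P = rect_lists_after_max n Q"
  by (simp add: rect_lists_after_max_def)

lemma card_rect_lists_Suc:
  "card (rect_lists (Suc n)) =
     card (rect_lists n) + card (rect_lists_after_max (Suc n) (\<lambda>R. R \<noteq> []))"
proof -
  have "card (rect_lists (Suc n)) =
      card (rect_lists_after_max (Suc n) (\<lambda>R. length R = 0)) +
      card (rect_lists_after_max (Suc n) (\<lambda>R. R \<noteq> []))"
    using card_rect_lists_after_max_split[of "Suc n" "\<lambda>_. True" "\<lambda>R. length R = 0"]
    by (simp add: rect_lists_after_max_True)
  then show ?thesis using card_rect_lists_after_max_short[of 0 "Suc n"] by simp
qed

lemma card_rect_lists_after_max_nonempty:
  "card (rect_lists_after_max (Suc (Suc n)) (\<lambda>R. R \<noteq> [])) =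
     card (rect_lists (Suc n)) + card (rect_lists_after_max (Suc (Suc n)) (\<lambda>R. 2 \<le> length R))"
proof -
  have "rect_lists_after_max (Suc (Suc n)) (\<lambda>R. R \<noteq> [] \<and> length R = 1) =
      rect_lists_after_max (Suc (Suc n)) (\<lambda>R. length R = 1)"
    and "rect_lists_after_max (Suc (Suc n)) (\<lambda>R. R \<noteq> [] \<and> length R \<noteq> 1) =
      rect_lists_after_max (Suc (Suc n)) (\<lambda>R. 2 \<le> length R)"
    by (auto intro!: rect_lists_after_max_cong simp: numeral_2_eq_2 Suc_le_eq Suc_lessI)
  then show ?thesis
    using card_rect_lists_after_max_split[of "Suc (Suc n)" "\<lambda>R. R \<noteq> []" "\<lambda>R. length R = 1"]
      card_rect_lists_after_max_short[of 1 "Suc (Suc n)"]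
    by simp
qed

lemma rect_lists_1: "rect_lists 1 = {[1]}"
proof -
  have "xs = [1]" if "xs \<in> rect_lists 1" for xs
    using that length_rect_lists[OF that] by (cases xs) (auto simp: rect_lists_def)
  moreover have "rect_list [1]" by (simp add: rect_list_def)
  ultimately show ?thesis by (auto simp: rect_lists_def)
qed

lemma rect_lists_after_max_2_long: "rect_lists_after_max 2 (\<lambda>R. 2 \<le> length R) = {}"
proof -
  have False if "xs \<in> rect_lists_after_max 2 (\<lambda>R. 2 \<le> length R)" for xs
  proof (rule rect_lists_after_max_nonemptyE[OF that])
    fix L y R assume "xs = L @ 2 # y # R" "xs \<in> rect_lists 2" "2 \<le> length (y # R)"
    then show False using length_rect_lists[of xs 2] by simp
  qed auto
  then show ?thesis by blast
qed

lemma walk_count_rect_lists: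
  "walk_count (2 * k) 4 = card (rect_lists (Suc k)) \<and>
   walk_count (2 * k) 2 + walk_count (2 * k) 6 =
     card (rect_lists_after_max (Suc (Suc k)) (\<lambda>R. 2 \<le> length R))"
proof (induction k)
  case 0
  show ?case using rect_lists_1 rect_lists_after_max_2_long by (simp add: numeral_2_eq_2)
next
  case (Suc k)
  have "2 * Suc k = Suc (Suc (2 * k))" by simp
  then show ?case
    using Suc.IH walk_count_step_4[of "2 * k"] walk_count_step_2_6[of "2 * k"]
      card_rect_lists_Suc[of "Suc k"] card_rect_lists_after_max_nonempty[of k]
      card_rect_lists_after_max_long[of "Suc (Suc k)"]
    by simp
qed

theorem theorem8p1:
  fixes n :: nat
  assumes "n \<ge> 1"
  shows "\<exists>f. bij_betw f (P7_walks_v4 (2 * n - 2)) (rect_perms n)"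
proof -
  obtain k where k: "n = Suc k" using assms by (cases n) auto
  have walks: "P7_walks_v4 (2 * n - 2) = P7_walks_4_to (2 * k) 4"
    by (simp add: k P7_walks_v4_def P7_walks_4_to_def)
  have "card (P7_walks_v4 (2 * n - 2)) = card (rect_lists n)"
    unfolding walks card_P7_walks_4_to using walk_count_rect_lists[of k] k by simp
  also have "\<dots> = card (rect_perms n)"
    using bij_betw_same_card[OF bij_betw_rect_perms_rect_lists] by simp
  finally show ?thesis
    using finite_same_card_bij finite_P7_walks_4_to finite_rect_lists
      bij_betw_finite[OF bij_betw_rect_perms_rect_lists] walks by metis
qed

end
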